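(* Let $G$ be a graph, let $X,Y$ be disjoint subsets of $V(G)$, and let $K_1,K_2$ be two minimal $X-Y$ separators. Let $K_1^t=K_1 \cap NR(G,Y,K_2)$, $K_1^b=(K_1 \setminus K_1^t) \setminus (K_1 \cap K_2)$, $K_2^t=K_2 \cap NR(G,Y,K_1)$, $K_2^b=(K_2 \setminus K_2^t) \setminus (K_1 \cap K_2)$, and let $Top(K_1,K_2)=K_1^t \cup K_2^t \cup (K_1 \cap K_2)$ and $Bottom(K_1,K_2)=K_1^b \cup K_2^b \cup (K_1 \cap K_2)$. Then both $Top(K_1,K_2)$ and $Bottom(K_1,K_2)$ are $X-Y$ separators. Moreover, $Bottom(K_1,K_2) \geq K_1$ and $Bottom(K_1,K_2) \geq K_2$.
   Context: $G$ is a finite undirected graph. For disjoint $X,Y \subseteq V(G)$, an $X-Y$ separator is a set $K \subseteq V(G) \setminus (X \cup Y)$ such that $G \setminus K$ (the subgraph induced by $V(G)\setminus K$) contains no path from a vertex of $X$ to a vertex of $Y$; it is minimal if it is minimal under inclusion. For disjoint $A,B \subseteq V(G)$, $NR(G,A,B)$ denotes the set of vertices of $G$ that are not reachable from $A$ in $G \setminus B$. For $X-Y$ separators $K,K'$, we write $K \geq K'$ if $NR(G,Y,K) \supseteq NR(G,Y,K')$. *)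

theory Defs
  imports Main
begin

text \<open>A finite undirected graph: finite vertex set V and a symmetric edge relation E on V
  (loops are irrelevant for reachability).\<close>

definition graph :: "'a set \<Rightarrow> ('a \<Rightarrow> 'a \<Rightarrow> bool) \<Rightarrow> bool" where
  "graph V E \<longleftrightarrow> finite V \<and> (\<forall>u v. E u v \<longrightarrow> u \<in> V \<and> v \<in> V) \<and> (\<forall>u v. E u v \<longrightarrow> E v u)"

inductive reach :: "'a set \<Rightarrow> ('a \<Rightarrow> 'a \<Rightarrow> bool) \<Rightarrow> 'a set \<Rightarrow> 'a \<Rightarrow> 'a \<Rightarrow> bool"
  for V E W where
  refl: "u \<in> V \<Longrightarrow> u \<in> W \<Longrightarrow> reach V E W u u"
| step: "reach V E W u v \<Longrightarrow> E v w \<Longrightarrow> w \<in> V \<Longrightarrow> w \<in> W \<Longrightarrow> reach V E W u w"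

definition separator :: "'a set \<Rightarrow> ('a \<Rightarrow> 'a \<Rightarrow> bool) \<Rightarrow> 'a set \<Rightarrow> 'a set \<Rightarrow> 'a set \<Rightarrow> bool" where
  "separator V E X Y K \<longleftrightarrow> K \<subseteq> V - (X \<union> Y) \<and>
     \<not> (\<exists>x\<in>X. \<exists>y\<in>Y. reach V E (V - K) x y)"

definition minimal_separator :: "'a set \<Rightarrow> ('a \<Rightarrow> 'a \<Rightarrow> bool) \<Rightarrow> 'a set \<Rightarrow> 'a set \<Rightarrow> 'a set \<Rightarrow> bool" where
  "minimal_separator V E X Y K \<longleftrightarrow> separator V E X Y K \<and>
     (\<forall>K'. K' \<subset> K \<longrightarrow> \<not> separator V E X Y K')"

definition NR :: "'a set \<Rightarrow> ('a \<Rightarrow> 'a \<Rightarrow> bool) \<Rightarrow> 'a set \<Rightarrow> 'a set \<Rightarrow> 'a set" where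
  "NR V E A B = {v \<in> V. \<not> (\<exists>a\<in>A. reach V E (V - B) a v)}"

text \<open>K \<ge> K' (w.r.t. X,Y): NR(G,Y,K) \<supseteq> NR(G,Y,K').\<close>
definition sep_ge :: "'a set \<Rightarrow> ('a \<Rightarrow> 'a \<Rightarrow> bool) \<Rightarrow> 'a set \<Rightarrow> 'a set \<Rightarrow> 'a set \<Rightarrow> bool" where
  "sep_ge V E Y K K' \<longleftrightarrow> NR V E Y K' \<subseteq> NR V E Y K"

definition Top :: "'a set \<Rightarrow> ('a \<Rightarrow> 'a \<Rightarrow> bool) \<Rightarrow> 'a set \<Rightarrow> 'a set \<Rightarrow> 'a set \<Rightarrow> 'a set" where
  "Top V E Y K1 K2 = (K1 \<inter> NR V E Y K2) \<union> (K2 \<inter> NR V E Y K1) \<union> (K1 \<inter> K2)"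

definition Bottom :: "'a set \<Rightarrow> ('a \<Rightarrow> 'a \<Rightarrow> bool) \<Rightarrow> 'a set \<Rightarrow> 'a set \<Rightarrow> 'a set \<Rightarrow> 'a set" where
  "Bottom V E Y K1 K2 =
     ((K1 - (K1 \<inter> NR V E Y K2)) - (K1 \<inter> K2)) \<union>
     ((K2 - (K2 \<inter> NR V E Y K1)) - (K1 \<inter> K2)) \<union> (K1 \<inter> K2)"

end

theory Submission
  imports Defs
begin

text \<open>Both claims reduce to comparing the sets NR(G,Y,-) of vertices cut off from Y.
  Walk from Y along a path avoiding Bottom(K1,K2): the first vertex of K1 \<union> K2 it met
  would already be reachable from Y past the other separator, i.e. it would lie in
  Bottom. Hence such a path avoids K1 and K2, so NR(K1) \<union> NR(K2) \<subseteq> NR(Bottom).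
  Likewise a path from Y avoiding Top(K1,K2) stays off K1 or stays off K2, so
  NR(K1) \<inter> NR(K2) \<subseteq> NR(Top). Since a separator is exactly a set cutting all of X
  off from Y, both Top and Bottom separate.\<close>

lemma reach_in_vertices: "reach V E W u v \<Longrightarrow> u \<in> V \<and> v \<in> V"
  by (induction rule: reach.induct) auto

lemma reach_prepend:
  assumes "reach V E W v w" "E u v" "u \<in> V" "u \<in> W"
  shows "reach V E W u w"
  using assms
proof (induction rule: reach.induct)
  case (refl v)
  then show ?case by (meson reach.refl reach.step)
next
  case (step v v' w)
  then show ?case by (meson reach.step)
qed

lemma reach_sym:
  assumes g: "graph V E" and r: "reach V E W u v"
  shows "reach V E W v u"
  using r
proof (induction rule: reach.induct)
  case (refl u)
  then show ?case by (rule reach.refl)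
next
  case (step u v w)
  have "E w v" using g \<open>E v w\<close> unfolding graph_def by blast
  then show ?case using reach_prepend[OF step.IH] step.hyps by blast
qed

lemma notin_NR_source:
  "y \<in> Y \<Longrightarrow> y \<in> V \<Longrightarrow> y \<notin> K \<Longrightarrow> y \<notin> NR V E Y K"
  unfolding NR_def by (blast intro: reach.refl)

lemma notin_NR_step:
  assumes "v \<notin> NR V E Y K" "v \<in> V" "E v w" "w \<in> V" "w \<notin> K"
  shows "w \<notin> NR V E Y K"
  using assms unfolding NR_def by (blast intro: reach.step)

lemma separator_iff_NR:
  assumes "graph V E" "X \<subseteq> V"
  shows "separator V E X Y K \<longleftrightarrow> K \<subseteq> V - (X \<union> Y) \<and> X \<subseteq> NR V E Y K"
  using assms reach_sym[OF \<open>graph V E\<close>] unfolding separator_def NR_def by blast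

lemma mem_Bottom_iff:
  "w \<in> Bottom V E Y K1 K2 \<longleftrightarrow>
     w \<in> K1 \<inter> K2 \<or> (w \<in> K1 - K2 \<and> w \<notin> NR V E Y K2) \<or> (w \<in> K2 - K1 \<and> w \<notin> NR V E Y K1)"
  unfolding Bottom_def by blast

lemma mem_Top_iff:
  "w \<in> Top V E Y K1 K2 \<longleftrightarrow>
     w \<in> K1 \<inter> K2 \<or> (w \<in> K1 \<and> w \<in> NR V E Y K2) \<or> (w \<in> K2 \<and> w \<in> NR V E Y K1)"
  unfolding Top_def by blast

lemma reach_avoiding_Bottom:
  assumes "K1 \<inter> Y = {}" "K2 \<inter> Y = {}"
    and "reach V E (V - Bottom V E Y K1 K2) y v" "y \<in> Y"
  shows "v \<notin> NR V E Y K1 \<and> v \<notin> NR V E Y K2"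
  using assms(3,4)
proof (induction rule: reach.induct)
  case (refl y)
  have "y \<notin> K1" "y \<notin> K2" using assms(1,2) refl.prems by blast+
  with refl show ?case by (simp add: notin_NR_source)
next
  case (step u v w)
  have v: "v \<in> V" "v \<notin> NR V E Y K1" "v \<notin> NR V E Y K2"
    using reach_in_vertices[OF step.hyps(1)] step.IH[OF step.prems] by auto
  have w: "w \<notin> Bottom V E Y K1 K2" "E v w" "w \<in> V" using step.hyps(2-4) by auto
  \<comment> \<open>a step into K1 - K2 (or K2 - K1) would be a step into Bottom\<close>
  have "w \<notin> K1" "w \<notin> K2"
    using w(1) notin_NR_step[OF v(2,1) w(2,3)] notin_NR_step[OF v(3,1) w(2,3)]
    unfolding mem_Bottom_iff by blast+
  then show ?case using notin_NR_step[OF v(2,1) w(2,3)] notin_NR_step[OF v(3,1) w(2,3)]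
    by blast
qed

lemma reach_avoiding_Top:
  assumes "K1 \<inter> Y = {}" "K2 \<inter> Y = {}"
    and "reach V E (V - Top V E Y K1 K2) y v" "y \<in> Y"
  shows "v \<notin> NR V E Y K1 \<or> v \<notin> NR V E Y K2"
  using assms(3,4)
proof (induction rule: reach.induct)
  case (refl y)
  have "y \<notin> K1" using assms(1) refl.prems by blast
  with refl show ?case by (simp add: notin_NR_source)
next
  case (step u v w)
  have v: "v \<in> V" "v \<notin> NR V E Y K1 \<or> v \<notin> NR V E Y K2"
    using reach_in_vertices[OF step.hyps(1)] step.IH[OF step.prems] by auto
  have w: "w \<notin> Top V E Y K1 K2" "E v w" "w \<in> V" using step.hyps(2-4) by auto
  \<comment> \<open>a step out of the region reachable past K1 enters K1, so outside Top it stays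
    in the region reachable past K2\<close>
  show ?case
    using v w notin_NR_step[of v V E Y K1 w] notin_NR_step[of v V E Y K2 w]
    unfolding mem_Top_iff by blast
qed

lemma NR_union_subset_NR_Bottom:
  assumes "K1 \<inter> Y = {}" "K2 \<inter> Y = {}"
  shows "NR V E Y K1 \<union> NR V E Y K2 \<subseteq> NR V E Y (Bottom V E Y K1 K2)"
proof
  fix v assume v: "v \<in> NR V E Y K1 \<union> NR V E Y K2"
  show "v \<in> NR V E Y (Bottom V E Y K1 K2)"
  proof (rule ccontr)
    assume "v \<notin> NR V E Y (Bottom V E Y K1 K2)"
    moreover have "v \<in> V" using v unfolding NR_def by blast
    ultimately obtain y where "y \<in> Y" "reach V E (V - Bottom V E Y K1 K2) y v"
      unfolding NR_def by blast
    with v reach_avoiding_Bottom[OF assms] show False by blast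
  qed
qed

lemma NR_inter_subset_NR_Top:
  assumes "K1 \<inter> Y = {}" "K2 \<inter> Y = {}"
  shows "NR V E Y K1 \<inter> NR V E Y K2 \<subseteq> NR V E Y (Top V E Y K1 K2)"
proof
  fix v assume v: "v \<in> NR V E Y K1 \<inter> NR V E Y K2"
  show "v \<in> NR V E Y (Top V E Y K1 K2)"
  proof (rule ccontr)
    assume "v \<notin> NR V E Y (Top V E Y K1 K2)"
    moreover have "v \<in> V" using v unfolding NR_def by blast
    ultimately obtain y where "y \<in> Y" "reach V E (V - Top V E Y K1 K2) y v"
      unfolding NR_def by blast
    with v reach_avoiding_Top[OF assms] show False by blast
  qed
qed

theorem proposition2:
  fixes V :: "'a set" and E :: "'a \<Rightarrow> 'a \<Rightarrow> bool" and X Y K1 K2 :: "'a set"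
  assumes "graph V E"
    and "X \<subseteq> V" and "Y \<subseteq> V" and "X \<inter> Y = {}"
    and "minimal_separator V E X Y K1"
    and "minimal_separator V E X Y K2"
  shows "separator V E X Y (Top V E Y K1 K2) \<and> separator V E X Y (Bottom V E Y K1 K2) \<and>
         sep_ge V E Y (Bottom V E Y K1 K2) K1 \<and> sep_ge V E Y (Bottom V E Y K1 K2) K2"
proof -
  note sep_iff = separator_iff_NR[OF assms(1,2)]
  have K: "K1 \<union> K2 \<subseteq> V - (X \<union> Y)" and X: "X \<subseteq> NR V E Y K1 \<inter> NR V E Y K2"
    using assms(5,6) unfolding minimal_separator_def sep_iff by auto
  then have KY: "K1 \<inter> Y = {}" "K2 \<inter> Y = {}" by auto
  have "Top V E Y K1 K2 \<subseteq> K1 \<union> K2" "Bottom V E Y K1 K2 \<subseteq> K1 \<union> K2"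
    unfolding Top_def Bottom_def by blast+
  moreover have "X \<subseteq> NR V E Y (Top V E Y K1 K2)" "X \<subseteq> NR V E Y (Bottom V E Y K1 K2)"
    using X NR_inter_subset_NR_Top[OF KY] NR_union_subset_NR_Bottom[OF KY] by blast+
  ultimately have "separator V E X Y (Top V E Y K1 K2)" "separator V E X Y (Bottom V E Y K1 K2)"
    using K unfolding sep_iff by blast+
  moreover have "sep_ge V E Y (Bottom V E Y K1 K2) K1" "sep_ge V E Y (Bottom V E Y K1 K2) K2"
    using NR_union_subset_NR_Bottom[OF KY] unfolding sep_ge_def by blast+
  ultimately show ?thesis by blast
qed

end
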